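(* Let $G$ be a finitely generated amenable group, $S=\{g_1,\dots,g_d\}$ a finite generating set of $G$, $\mathcal C$ a finite set of colors, and $T$ a finite set of Wang tiles on $\mathcal C$ and $S$. If there is a tiling of $G$ with the tiles $T$, i.e. the $G$-Wang subshift $X_T=\{x\in T^G : \forall g\in G,\ \forall s\in S\cup S^{-1},\ x_g(s)=x_{gs}(s^{-1})\}$ is nonempty, then the graphs $\Gamma_1,\dots,\Gamma_d$ associated to $T$ satisfy condition $(\star\star)$ (equivalently, $T$ satisfies condition $(\star\star)'$).
   Context: A Wang tile on $\mathcal C$ and $S$ is a map $\tau: S\cup S^{-1}\to\mathcal C$. The graphs associated to $T$: for each $1\le i\le d$, $\Gamma_i$ is the directed graph with vertex set $T$ and an edge $\tau\to\tau'$ iff $\tau(g_i)=\tau'(g_i^{-1})$. A cycle in a directed graph is a closed walk $\overline{a_1,\dots,a_n}$ (repetitions allowed) with edges $a_k\to a_{k+1}$ for $k<n$ and $a_n\to a_1$; it is simple if the $a_k$ are pairwise distinct. For a cycle $w$ and vertex $a$, $|w|_a=\#\{k:a_k=a\}$. Let $\{\omega_i^1,\dots,\omega_i^{m_i}\}$ be the finite set of simple cycles of $\Gamma_i$ (up to cyclic rotation). Condition $(\star\star)$: every $\Gamma_i$ contains at least one cycle, and there exist nonnegative reals $x_{i,j}$, not all zero, such that for every $a\in T$, $\sum_{j=1}^{m_1}x_{1,j}|\omega_1^j|_a=\dots=\sum_{j=1}^{m_d}x_{d,j}|\omega_d^j|_a$. Condition $(\star\star)'$: with $c_g=\{\tau\in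 T:\tau(g)=c\}$ for $g\in S\cup S^{-1}$, $c\in\mathcal C$, there exist nonnegative reals $(x_\tau)_{\tau\in T}$, not all zero, with $\sum_{\tau\in c_g}x_\tau=\sum_{\tau\in c_{g^{-1}}}x_\tau$ for all $g\in S$, $c\in\mathcal C$. *)

theory Defs
  imports "HOL-Algebra.Algebra"
begin

definition amenable_group :: "('g, 'b) monoid_scheme \<Rightarrow> bool" where
  "amenable_group G \<longleftrightarrow> group G \<and>
     (\<forall>K (\<epsilon>::real). finite K \<and> K \<subseteq> carrier G \<and> \<epsilon> > 0 \<longrightarrow>
        (\<exists>F. finite F \<and> F \<noteq> {} \<and> F \<subseteq> carrier G \<and>
             (\<forall>k\<in>K. real (card ((((\<lambda>f. k \<otimes>\<^bsub>G\<^esub> f) ` F) - F) \<union> (F - ((\<lambda>f. k \<otimes>\<^bsub>G\<^esub> f) ` F))))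
                      \<le> \<epsilon> * real (card F))))"

definition sym_gens :: "('g, 'b) monoid_scheme \<Rightarrow> 'g list \<Rightarrow> 'g set" where
  "sym_gens G gs = set gs \<union> (\<lambda>s. inv\<^bsub>G\<^esub> s) ` set gs"

definition wang_subshift ::
  "('g, 'b) monoid_scheme \<Rightarrow> 'g list \<Rightarrow> ('g \<Rightarrow> 'c) set \<Rightarrow> ('g \<Rightarrow> 'g \<Rightarrow> 'c) set" where
  "wang_subshift G gs T = {x. x \<in> carrier G \<rightarrow> T \<and>
      (\<forall>g\<in>carrier G. \<forall>s\<in>sym_gens G gs. x g s = x (g \<otimes>\<^bsub>G\<^esub> s) (inv\<^bsub>G\<^esub> s))}"

text \<open>Edge relation of the graph Gamma_i (i is 0-based: generator gs ! i).\<close>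
definition wang_edge ::
  "('g, 'b) monoid_scheme \<Rightarrow> 'g list \<Rightarrow> nat \<Rightarrow> ('g \<Rightarrow> 'c) \<Rightarrow> ('g \<Rightarrow> 'c) \<Rightarrow> bool" where
  "wang_edge G gs i \<tau> \<tau>' \<longleftrightarrow> \<tau> (gs ! i) = \<tau>' (inv\<^bsub>G\<^esub> (gs ! i))"

definition is_cycle :: "'v set \<Rightarrow> ('v \<Rightarrow> 'v \<Rightarrow> bool) \<Rightarrow> 'v list \<Rightarrow> bool" where
  "is_cycle V E w \<longleftrightarrow> w \<noteq> [] \<and> set w \<subseteq> V \<and>
     (\<forall>k. Suc k < length w \<longrightarrow> E (w ! k) (w ! Suc k)) \<and> E (last w) (hd w)"

definition is_simple_cycle :: "'v set \<Rightarrow> ('v \<Rightarrow> 'v \<Rightarrow> bool) \<Rightarrow> 'v list \<Rightarrow> bool" where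
  "is_simple_cycle V E w \<longleftrightarrow> is_cycle V E w \<and> distinct w"

definition simple_cycle_classes :: "'v set \<Rightarrow> ('v \<Rightarrow> 'v \<Rightarrow> bool) \<Rightarrow> 'v list set set" where
  "simple_cycle_classes V E = {{rotate k w | k. True} | w. is_simple_cycle V E w}"

definition cycle_mult :: "'v list set \<Rightarrow> 'v \<Rightarrow> nat" where
  "cycle_mult \<omega> a = count_list (SOME w. w \<in> \<omega>) a"

text \<open>Condition (star star) for the graphs Gamma_1..Gamma_d (indices 0..d-1).\<close>
definition cond_star_star ::
  "('g, 'b) monoid_scheme \<Rightarrow> 'g list \<Rightarrow> ('g \<Rightarrow> 'c) set \<Rightarrow> bool" where
  "cond_star_star G gs T \<longleftrightarrow>
     (\<forall>i < length gs. \<exists>w. is_cycle T (wang_edge G gs i) w) \<and>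
     (\<exists>x :: nat \<Rightarrow> ('g \<Rightarrow> 'c) list set \<Rightarrow> real.
        (\<forall>i < length gs. \<forall>\<omega> \<in> simple_cycle_classes T (wang_edge G gs i). x i \<omega> \<ge> 0) \<and>
        (\<exists>i < length gs. \<exists>\<omega> \<in> simple_cycle_classes T (wang_edge G gs i). x i \<omega> \<noteq> 0) \<and>
        (\<forall>a\<in>T. \<forall>i < length gs. \<forall>j < length gs.
           (\<Sum>\<omega>\<in>simple_cycle_classes T (wang_edge G gs i). x i \<omega> * real (cycle_mult \<omega> a)) =
           (\<Sum>\<omega>\<in>simple_cycle_classes T (wang_edge G gs j). x j \<omega> * real (cycle_mult \<omega> a))))"

end

theory Submission
  imports Defs "HOL-Analysis.Analysis"
begin

(* Averaging a tiling x over a Foelner set F gives tile frequencies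
   p tau = |{f in F. x (inv f) = tau}| / |F|. The tile at inv f shows colour c on side g exactly
   when the tile at inv (inv g * f) shows c on side inv g. So counting the tiles with colour c on
   side g over F is counting the tiles with colour c on side inv g over (inv g) F, and the two
   frequencies differ by at most |(inv g) F symdiff F| / |F|. A limit point in the compact
   simplex of weights is exactly balanced, which is condition (star star)'.
   In Gamma_i balance says that for each colour the weight of tiles having it on side g_i equals
   the weight of tiles having it on side inv g_i, so the support of a nonzero balanced weight
   contains a simple cycle. Subtracting the minimal weight along it and inducting on the support
   writes the weight as a nonnegative combination of simple cycles of Gamma_i; since these
   decompositions all represent the same weight, they witness (star star). *)

section \<open>Cycle decomposition of balanced weights\<close>

lemma is_simple_cycle_walk_segment:
  assumes walk_in: "\<And>n. f n \<in> U" and walk_step: "\<And>n. E (f n) (f (Suc n))"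
    and "i < j" and "f i = f j" and "inj_on f {i..<j}"
  shows "is_simple_cycle U E (map f [i..<j])"
  unfolding is_simple_cycle_def is_cycle_def
proof (intro conjI allI impI)
  have "last (map f [i..<j]) = f (j - 1)" and "hd (map f [i..<j]) = f j"
    using assms(3,4) by (simp_all add: last_map hd_map)
  moreover have "Suc (j - 1) = j" using assms(3) by simp
  ultimately show "E (last (map f [i..<j])) (hd (map f [i..<j]))"
    using walk_step[of "j - 1"] by simp
next
  fix k assume "Suc k < length (map f [i..<j])"
  then show "E (map f [i..<j] ! k) (map f [i..<j] ! Suc k)"
    using walk_step[of "i + k"] by simp
qed (use assms in \<open>auto simp: distinct_map\<close>)

lemma exists_simple_cycle:
  assumes "finite U" and "U \<noteq> {}" and succ: "\<And>a. a \<in> U \<Longrightarrow> \<exists>b\<in>U. E a b"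
  shows "\<exists>w. is_simple_cycle U E w"
proof -
  obtain a0 where a0: "a0 \<in> U" using assms(2) by blast
  obtain nx where nx: "\<And>a. a \<in> U \<Longrightarrow> nx a \<in> U \<and> E a (nx a)" using succ by metis
  define f where "f n = (nx ^^ n) a0" for n
  have f_in: "f n \<in> U" for n by (induction n) (simp_all add: f_def a0 nx)
  have f_step: "E (f n) (f (Suc n))" for n using nx[OF f_in[of n]] by (simp add: f_def)
  have "\<not> inj f"
    using finite_subset[OF _ assms(1), of "range f"] f_in by (auto dest: finite_imageD)
  then have "\<exists>j. \<exists>i<j. f i = f j"
    unfolding inj_def by (metis linorder_neqE_nat)
  define j where "j = (LEAST j. \<exists>i<j. f i = f j)"
  obtain i where ij: "i < j" "f i = f j"
    using LeastI_ex[OF \<open>\<exists>j. \<exists>i<j. f i = f j\<close>] unfolding j_def by blast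
  have no_repeat: "f k \<noteq> f l" if "k < l" "l < j" for k l
    using that Least_le[of "\<lambda>j. \<exists>i<j. f i = f j" l] unfolding j_def by auto
  have "inj_on f {i..<j}"
    by (rule inj_onI) (metis atLeastLessThan_iff linorder_neqE_nat no_repeat)
  then show ?thesis
    using is_simple_cycle_walk_segment[of f U E, OF f_in f_step ij] by blast
qed

lemma count_list_rotate1: "count_list (rotate1 xs) a = count_list xs a"
  by (cases xs) auto

lemma map_out_eq_map_inn_rotate1:
  assumes "is_cycle V (\<lambda>a b. out a = inn b) w"
  shows "map out w = map inn (rotate1 w)"
proof -
  obtain a ws where w: "w = a # ws" using assms unfolding is_cycle_def by (cases w) auto
  show ?thesis
  proof (rule nth_equalityI)
    fix k assume k: "k < length (map out w)"
    show "map out w ! k = map inn (rotate1 w) ! k"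
    proof (cases "Suc k < length w")
      case True
      moreover have "rotate1 w ! k = w ! Suc k" using True by (simp add: w nth_append)
      ultimately show ?thesis using assms k unfolding is_cycle_def by simp
    next
      case False
      then have "k = length ws" using k w by simp
      then have "w ! k = last w" and "rotate1 w ! k = hd w" by (simp_all add: w nth_append last_conv_nth)
      then show ?thesis using assms k unfolding is_cycle_def by simp
    qed
  qed simp
qed

lemma card_out_eq_card_inn_simple_cycle:
  assumes "is_simple_cycle V (\<lambda>a b. out a = inn b) w"
  shows "card {a \<in> set w. out a = c} = card {a \<in> set w. inn a = c}"
proof -
  have card_eq_count: "card {a \<in> set w. h a = c} = count_list (map h w) c" for h
  proof -
    have "count_list (map h w) c = length (filter (\<lambda>a. h a = c) w)"
      by (simp add: count_list_eq_length_filter filter_map comp_def eq_commute)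
    also have "\<dots> = card {a \<in> set w. h a = c}"
      using assms by (simp add: is_simple_cycle_def distinct_length_filter Collect_conj_eq Int_commute)
    finally show ?thesis by simp
  qed
  have "count_list (map out w) c = count_list (map inn w) c"
    using map_out_eq_map_inn_rotate1[of V out inn w] assms
    by (simp add: is_simple_cycle_def count_list_rotate1 flip: rotate1_map)
  then show ?thesis by (simp add: card_eq_count)
qed

lemma finite_simple_cycle_classes:
  assumes "finite V"
  shows "finite (simple_cycle_classes V E)"
proof -
  have "{w. is_simple_cycle V E w} \<subseteq> {w. set w \<subseteq> V \<and> distinct w}"
    unfolding is_simple_cycle_def is_cycle_def by blast
  then have "finite {w. is_simple_cycle V E w}"
    using finite_subset_distinct[OF assms] by (rule finite_subset)
  moreover have "simple_cycle_classes V E = (\<lambda>w. {rotate k w | k. True}) ` {w. is_simple_cycle V E w}"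
    unfolding simple_cycle_classes_def by blast
  ultimately show ?thesis by simp
qed

lemma cycle_mult_rotations:
  assumes "distinct w"
  shows "cycle_mult {rotate k w | k. True} a = (if a \<in> set w then 1 else 0)"
proof -
  obtain k where "(SOME v. v \<in> {rotate k w | k. True}) = rotate k w"
    using someI_ex[of "\<lambda>v. v \<in> {rotate k w | k. True}"] by blast
  then show ?thesis
    using assms distinct_count_atmost_1[of "rotate k w"]
    by (simp add: cycle_mult_def flip: count_mset)
qed

lemma simple_cycle_in_support_of_balanced_weight:
  fixes p :: "'v \<Rightarrow> real"
  assumes "finite V" and nonneg: "\<forall>a\<in>V. 0 \<le> p a"
    and balanced: "\<And>c. sum p {a\<in>V. out a = c} = sum p {a\<in>V. inn a = c}"
    and "a \<in> V" and "0 < p a"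
  shows "\<exists>w. is_simple_cycle {a\<in>V. 0 < p a} (\<lambda>a b. out a = inn b) w"
proof (rule exists_simple_cycle)
  fix a assume a: "a \<in> {a\<in>V. 0 < p a}"
  show "\<exists>b\<in>{a\<in>V. 0 < p a}. out a = inn b"
  proof (rule ccontr)
    assume "\<not> ?thesis"
    then have "sum p {b\<in>V. inn b = out a} \<le> 0"
      using nonneg by (intro sum_nonpos) force
    moreover have "p a \<le> sum p {b\<in>V. out b = out a}"
      using a nonneg \<open>finite V\<close> by (intro member_le_sum) auto
    ultimately show False using balanced a by simp
  qed
qed (use assms in auto)

lemma balanced_weight_minus_cycle:
  fixes p :: "'v \<Rightarrow> real"
  assumes "finite V"
    and balanced: "\<And>c. sum p {a\<in>V. out a = c} = sum p {a\<in>V. inn a = c}"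
    and cycle: "is_simple_cycle V (\<lambda>a b. out a = inn b) w"
  shows "sum (\<lambda>a. p a - (if a \<in> set w then m else 0)) {a\<in>V. out a = c} =
         sum (\<lambda>a. p a - (if a \<in> set w then m else 0)) {a\<in>V. inn a = c}"
proof -
  have "set w \<subseteq> V" using cycle by (simp add: is_simple_cycle_def is_cycle_def)
  then have "{a\<in>V. P a} \<inter> set w = {a\<in>set w. P a}" for P by blast
  then have "sum (\<lambda>a. p a - (if a \<in> set w then m else 0)) {a\<in>V. P a} =
      sum p {a\<in>V. P a} - m * real (card {a\<in>set w. P a})" for P
    using \<open>finite V\<close> by (simp add: sum_subtractf sum.If_cases)
  then show ?thesis
    using balanced card_out_eq_card_inn_simple_cycle[OF cycle] by simp
qed

lemma sum_simple_cycle_classes_add_cycle: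
  assumes "finite V" and "is_simple_cycle V E w"
  shows "(\<Sum>\<omega>\<in>simple_cycle_classes V E.
      (y \<omega> + (if \<omega> = {rotate k w | k. True} then m else 0)) * real (cycle_mult \<omega> a)) =
    (\<Sum>\<omega>\<in>simple_cycle_classes V E. y \<omega> * real (cycle_mult \<omega> a)) + (if a \<in> set w then m else 0)"
proof -
  have "{rotate k w | k. True} \<in> simple_cycle_classes V E"
    unfolding simple_cycle_classes_def using assms(2) by blast
  moreover have "distinct w" using assms(2) by (simp add: is_simple_cycle_def)
  ultimately show ?thesis
    using finite_simple_cycle_classes[OF assms(1)] cycle_mult_rotations[of w a]
    by (simp add: distrib_right sum.distrib if_distrib[of "\<lambda>x. x * _"] sum.delta cong: if_cong)
qed

lemma balanced_weight_cycle_decomposition: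
  fixes p :: "'v \<Rightarrow> real"
  assumes "finite V" and "\<forall>a\<in>V. 0 \<le> p a"
    and "\<And>c. sum p {a\<in>V. out a = c} = sum p {a\<in>V. inn a = c}"
  shows "\<exists>y. (\<forall>\<omega>\<in>simple_cycle_classes V (\<lambda>a b. out a = inn b). 0 \<le> y \<omega>) \<and>
    (\<forall>a\<in>V. p a = (\<Sum>\<omega>\<in>simple_cycle_classes V (\<lambda>a b. out a = inn b). y \<omega> * real (cycle_mult \<omega> a)))"
  using assms(2,3)
proof (induction "card {a\<in>V. p a \<noteq> 0}" arbitrary: p rule: less_induct)
  case less
  let ?E = "\<lambda>a b. out a = inn b"
  let ?Cl = "simple_cycle_classes V ?E"
  define U where "U = {a\<in>V. 0 < p a}"
  have support: "{a\<in>V. p a \<noteq> 0} = U" using less.prems(1) by (force simp: U_def)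
  show ?case
  proof (cases "U = {}")
    case True
    then show ?thesis using support by (intro exI[of _ "\<lambda>_. 0"]) auto
  next
    case False
    then obtain w where "is_simple_cycle U ?E w"
      using simple_cycle_in_support_of_balanced_weight[OF \<open>finite V\<close> less.prems] by (auto simp: U_def)
    then have w_U: "set w \<subseteq> U" and "w \<noteq> []" and w_V: "is_simple_cycle V ?E w"
      unfolding is_simple_cycle_def is_cycle_def by (auto simp: U_def)
    define m where "m = Min (p ` set w)"
    obtain a0 where a0: "a0 \<in> set w" "p a0 = m"
    proof -
      have "m \<in> p ` set w" unfolding m_def using \<open>w \<noteq> []\<close> by (intro Min_in) auto
      then show ?thesis using that by blast
    qed
    have "0 < m" using a0 w_U by (auto simp: U_def)
    have m_le: "m \<le> p a" if "a \<in> set w" for a unfolding m_def using that by simp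
    define p' where "p' a = p a - (if a \<in> set w then m else 0)" for a
    have "{a\<in>V. p' a \<noteq> 0} \<subset> U"
    proof -
      have "{a\<in>V. p' a \<noteq> 0} \<subseteq> U" using w_U less.prems(1) by (auto simp: p'_def U_def)
      moreover have "a0 \<in> U" "p' a0 = 0" using w_U a0 by (auto simp: p'_def)
      ultimately show ?thesis by blast
    qed
    then have "card {a\<in>V. p' a \<noteq> 0} < card {a\<in>V. p a \<noteq> 0}"
      using \<open>finite V\<close> support by (intro psubset_card_mono) (auto simp: U_def)
    moreover have "\<forall>a\<in>V. 0 \<le> p' a" using less.prems(1) m_le by (simp add: p'_def)
    moreover have "sum p' {a\<in>V. out a = c} = sum p' {a\<in>V. inn a = c}" for c
      unfolding p'_def using balanced_weight_minus_cycle[OF \<open>finite V\<close> less.prems(2) w_V] .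
    ultimately obtain y' where y'_nonneg: "\<forall>\<omega>\<in>?Cl. 0 \<le> y' \<omega>"
      and y'_rep: "\<forall>a\<in>V. p' a = (\<Sum>\<omega>\<in>?Cl. y' \<omega> * real (cycle_mult \<omega> a))"
      using less.hyps by blast
    define y where "y \<omega> = y' \<omega> + (if \<omega> = {rotate k w | k. True} then m else 0)" for \<omega>
    have "p a = (\<Sum>\<omega>\<in>?Cl. y \<omega> * real (cycle_mult \<omega> a))" if "a \<in> V" for a
      using y'_rep[rule_format, OF that, symmetric] sum_simple_cycle_classes_add_cycle[OF \<open>finite V\<close> w_V]
      by (simp add: y_def p'_def)
    moreover have "\<forall>\<omega>\<in>?Cl. 0 \<le> y \<omega>" using y'_nonneg \<open>0 < m\<close> by (simp add: y_def)
    ultimately show ?thesis by blast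
  qed
qed

section \<open>Balanced tile weights and simple cycles\<close>

(* Condition (star star)' of the paper; the colour c ranges over all of 'c, which changes nothing
   since both sums vanish for colours outside C. *)
definition cond_star_star' :: "('g, 'b) monoid_scheme \<Rightarrow> 'g list \<Rightarrow> ('g \<Rightarrow> 'c) set \<Rightarrow> bool" where
  "cond_star_star' G gs T \<longleftrightarrow>
     (\<exists>p :: ('g \<Rightarrow> 'c) \<Rightarrow> real. (\<forall>\<tau>\<in>T. 0 \<le> p \<tau>) \<and> (\<exists>\<tau>\<in>T. p \<tau> \<noteq> 0) \<and>
        (\<forall>g\<in>set gs. \<forall>c. sum p {\<tau>\<in>T. \<tau> g = c} = sum p {\<tau>\<in>T. \<tau> (inv\<^bsub>G\<^esub> g) = c}))"

lemma cond_star_star_if_cond_star_star':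
  assumes "finite T" and "gs \<noteq> []" and "cond_star_star' G gs T"
  shows "cond_star_star G gs T"
proof -
  let ?Cl = "\<lambda>i. simple_cycle_classes T (wang_edge G gs i)"
  obtain p :: "_ \<Rightarrow> real" where p_nonneg: "\<forall>\<tau>\<in>T. 0 \<le> p \<tau>" and "\<exists>\<tau>\<in>T. p \<tau> \<noteq> 0"
    and balanced: "\<And>g c. g \<in> set gs \<Longrightarrow>
      sum p {\<tau>\<in>T. \<tau> g = c} = sum p {\<tau>\<in>T. \<tau> (inv\<^bsub>G\<^esub> g) = c}"
    using assms(3) unfolding cond_star_star'_def by auto
  then obtain a0 where "a0 \<in> T" "p a0 \<noteq> 0" by blast
  have decomposition: "\<exists>y. i < length gs \<longrightarrow> (\<forall>\<omega>\<in>?Cl i. 0 \<le> y \<omega>) \<and>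
      (\<forall>a\<in>T. p a = (\<Sum>\<omega>\<in>?Cl i. y \<omega> * real (cycle_mult \<omega> a)))" for i :: nat
    using balanced_weight_cycle_decomposition[OF \<open>finite T\<close> p_nonneg,
        where out = "\<lambda>\<tau>. \<tau> (gs ! i)" and inn = "\<lambda>\<tau>. \<tau> (inv\<^bsub>G\<^esub> (gs ! i))"]
      balanced[of "gs ! i"]
    unfolding wang_edge_def by auto
  obtain Y where Y: "\<forall>i. i < length gs \<longrightarrow> (\<forall>\<omega>\<in>?Cl i. 0 \<le> Y i \<omega>) \<and>
      (\<forall>a\<in>T. p a = (\<Sum>\<omega>\<in>?Cl i. Y i \<omega> * real (cycle_mult \<omega> a)))"
    using decomposition by metis
  then have Y_nonneg: "\<And>i. i < length gs \<Longrightarrow> \<forall>\<omega>\<in>?Cl i. 0 \<le> Y i \<omega>"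
    and Y_rep: "\<And>i a. i < length gs \<Longrightarrow> a \<in> T \<Longrightarrow>
      p a = (\<Sum>\<omega>\<in>?Cl i. Y i \<omega> * real (cycle_mult \<omega> a))"
    by simp_all
  have nonzero: "\<exists>\<omega>\<in>?Cl i. Y i \<omega> \<noteq> 0" if "i < length gs" for i
    using Y_rep[OF that \<open>a0 \<in> T\<close>] \<open>p a0 \<noteq> 0\<close> sum.not_neutral_contains_not_neutral by force
  then have cycle: "\<exists>w. is_cycle T (wang_edge G gs i) w" if "i < length gs" for i
    using that unfolding simple_cycle_classes_def is_simple_cycle_def by blast
  show ?thesis
    unfolding cond_star_star_def
  proof (intro conjI exI[of _ Y])
    show "\<exists>i<length gs. \<exists>\<omega>\<in>?Cl i. Y i \<omega> \<noteq> 0" using nonzero assms(2) by blast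
  qed (use cycle Y_nonneg Y_rep[symmetric] in simp_all)
qed

section \<open>Balanced tile weights from Foelner sets\<close>

lemma compact_common_zero_if_approximate_zeros:
  fixes f :: "'i \<Rightarrow> 'a::topological_space \<Rightarrow> real"
  assumes "compact S" and cont: "\<And>i. i \<in> I \<Longrightarrow> continuous_on UNIV (f i)"
    and approx: "\<And>\<epsilon>. 0 < \<epsilon> \<Longrightarrow> \<exists>x\<in>S. \<forall>i\<in>I. \<bar>f i x\<bar> \<le> \<epsilon>"
  shows "\<exists>x\<in>S. \<forall>i\<in>I. f i x = 0"
proof -
  define K where "K \<epsilon> = (\<Inter>i\<in>I. {x. \<bar>f i x\<bar> \<le> \<epsilon>})" for \<epsilon>
  have "S \<inter> (\<Inter>\<epsilon>\<in>{0<..}. K \<epsilon>) \<noteq> {}"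
  proof (rule compact_imp_fip_image[OF \<open>compact S\<close>])
    show "closed (K \<epsilon>)" for \<epsilon>
      unfolding K_def by (intro closed_INT ballI closed_Collect_le continuous_on_rabs cont continuous_on_const)
  next
    fix E :: "real set" assume "finite E" and "E \<subseteq> {0<..}"
    then have "0 < Min (insert 1 E)" by auto
    then obtain x where "x \<in> S" and "\<forall>i\<in>I. \<bar>f i x\<bar> \<le> Min (insert 1 E)" using approx by blast
    moreover have "Min (insert 1 E) \<le> \<epsilon>" if "\<epsilon> \<in> E" for \<epsilon> using \<open>finite E\<close> that by simp
    ultimately have "x \<in> S \<inter> (\<Inter>\<epsilon>\<in>E. K \<epsilon>)" by (force simp: K_def)
    then show "S \<inter> (\<Inter>\<epsilon>\<in>E. K \<epsilon>) \<noteq> {}" by blast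
  qed
  then obtain x where "x \<in> S" and "\<And>\<epsilon> i. 0 < \<epsilon> \<Longrightarrow> i \<in> I \<Longrightarrow> \<bar>f i x\<bar> \<le> \<epsilon>"
    by (auto simp: K_def)
  then show ?thesis by (metis abs_le_zero_iff add_0 field_le_epsilon)
qed

definition weight_simplex :: "'a set \<Rightarrow> ('a \<Rightarrow> real) set" where
  "weight_simplex T = {p \<in> (\<Pi>\<^sub>E \<tau>\<in>UNIV. if \<tau> \<in> T then {0..1} else {0}). sum p T = 1}"

lemma compact_weight_simplex: "compact (weight_simplex T)"
proof -
  have "compact (if \<tau> \<in> T then {0..1} else {0::real})" for \<tau> by simp
  then have "compact (\<Pi>\<^sub>E \<tau>\<in>UNIV. if \<tau> \<in> T then {0..1} else {0::real})"
    using compactin_PiE[of "\<lambda>_. euclidean" UNIV "\<lambda>\<tau>. if \<tau> \<in> T then {0..1} else {0::real}"]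
    by (simp add: euclidean_product_topology)
  moreover have "closed {p :: 'a \<Rightarrow> real. sum p T = 1}"
    by (intro closed_Collect_eq continuous_on_sum continuous_intros) simp_all
  ultimately show ?thesis
    unfolding weight_simplex_def by (simp add: Collect_conj_eq compact_Int_closed)
qed

definition empirical_weight :: "'f set \<Rightarrow> ('f \<Rightarrow> 'a) \<Rightarrow> 'a \<Rightarrow> real" where
  "empirical_weight F h \<tau> = real (card {f\<in>F. h f = \<tau>}) / real (card F)"

lemma sum_empirical_weight:
  assumes "finite F" and "finite T" and "h ` F \<subseteq> T"
  shows "(\<Sum>\<tau>\<in>{\<tau>\<in>T. P \<tau>}. empirical_weight F h \<tau>) = real (card {f\<in>F. P (h f)}) / real (card F)"
proof -
  have "(\<Sum>\<tau>\<in>{\<tau>\<in>T. P \<tau>}. real (card {f\<in>F. h f = \<tau>})) =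
      (\<Sum>\<tau>\<in>{\<tau>\<in>T. P \<tau>}. \<Sum>f\<in>{f\<in>{f\<in>F. P (h f)}. h f = \<tau>}. 1::real)"
    by (intro sum.cong) (auto intro!: arg_cong[where f = card])
  also have "\<dots> = real (card {f\<in>F. P (h f)})"
    using assms by (subst sum.group) auto
  finally show ?thesis by (simp add: empirical_weight_def flip: sum_divide_distrib)
qed

lemma empirical_weight_in_weight_simplex:
  assumes "finite F" and "F \<noteq> {}" and "finite T" and "h ` F \<subseteq> T"
  shows "empirical_weight F h \<in> weight_simplex T"
proof -
  have "empirical_weight F h \<tau> \<in> (if \<tau> \<in> T then {0..1} else {0})" for \<tau>
  proof -
    have "card {f\<in>F. h f = \<tau>} \<le> card F" using \<open>finite F\<close> by (intro card_mono) auto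
    moreover have "{f\<in>F. h f = \<tau>} = {}" if "\<tau> \<notin> T" using that assms(4) by auto
    ultimately show ?thesis
      using assms(1,2) by (simp add: empirical_weight_def card_gt_0_iff divide_le_eq_1)
  qed
  then show ?thesis
    using sum_empirical_weight[OF assms(1,3,4), of "\<lambda>_. True"] assms(1,2)
    by (simp add: weight_simplex_def PiE_iff card_gt_0_iff)
qed

lemma card_filter_le_symmetric_difference:
  assumes "finite A" and "finite B"
  shows "\<bar>real (card {a\<in>A. Q a}) - real (card {a\<in>B. Q a})\<bar> \<le> real (card ((A - B) \<union> (B - A)))"
proof -
  have "card {a\<in>U. Q a} \<le> card {a\<in>W. Q a} + card ((U - W) \<union> (W - U))"
    if "finite U" "finite W" for U W
  proof -
    have "card {a\<in>U. Q a} \<le> card ({a\<in>W. Q a} \<union> ((U - W) \<union> (W - U)))"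
      using that by (intro card_mono) auto
    then show ?thesis using card_Un_le order_trans by blast
  qed
  from this[of A B] this[of B A] show ?thesis using assms by (simp add: Un_commute)
qed

definition balance_defect ::
  "('g, 'b) monoid_scheme \<Rightarrow> ('g \<Rightarrow> 'c) set \<Rightarrow> 'g \<Rightarrow> 'c \<Rightarrow> (('g \<Rightarrow> 'c) \<Rightarrow> real) \<Rightarrow> real" where
  "balance_defect G T g c p = sum p {\<tau>\<in>T. \<tau> g = c} - sum p {\<tau>\<in>T. \<tau> (inv\<^bsub>G\<^esub> g) = c}"

lemma (in group) wang_subshift_colour_shift:
  assumes "x \<in> wang_subshift G gs T" and "set gs \<subseteq> carrier G" and "g \<in> set gs" and "f \<in> carrier G"
  shows "x (inv f) g = x (inv (inv g \<otimes> f)) (inv g)"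
proof -
  have "g \<in> carrier G" using assms(2,3) by auto
  then have "inv (inv g \<otimes> f) = inv f \<otimes> g" using assms(4) by (simp add: inv_mult_group)
  moreover have "x (inv f) g = x (inv f \<otimes> g) (inv g)"
    using assms(1,3,4) by (simp add: wang_subshift_def sym_gens_def)
  ultimately show ?thesis by simp
qed

lemma (in group) abs_balance_defect_empirical_weight_le:
  assumes x: "x \<in> wang_subshift G gs T" and gs: "set gs \<subseteq> carrier G" and "finite T"
    and "finite F" and "F \<noteq> {}" and F: "F \<subseteq> carrier G" and g: "g \<in> set gs"
    and foelner: "real (card (((\<lambda>f. inv g \<otimes> f) ` F - F) \<union> (F - (\<lambda>f. inv g \<otimes> f) ` F)))
      \<le> \<epsilon> * real (card F)"
  shows "\<bar>balance_defect G T g c (empirical_weight F (\<lambda>f. x (inv f)))\<bar> \<le> \<epsilon>"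
proof -
  define h where "h f = x (inv f)" for f
  define Q where "Q f \<longleftrightarrow> h f (inv g) = c" for f
  have "h ` F \<subseteq> T" using x F by (auto simp: h_def wang_subshift_def)
  have "inv g \<in> carrier G" using g gs by auto
  have "{f\<in>F. h f g = c} = {f\<in>F. Q (inv g \<otimes> f)}"
    using wang_subshift_colour_shift[OF x gs g] F by (auto simp: h_def Q_def)
  also have "card \<dots> = card {f\<in>(\<lambda>f. inv g \<otimes> f) ` F. Q f}"
  proof -
    have "{f\<in>(\<lambda>f. inv g \<otimes> f) ` F. Q f} = (\<lambda>f. inv g \<otimes> f) ` {f\<in>F. Q (inv g \<otimes> f)}" by auto
    moreover have "inj_on (\<lambda>f. inv g \<otimes> f) {f\<in>F. Q (inv g \<otimes> f)}"
      by (rule inj_on_subset[OF inj_on_cmult[OF \<open>inv g \<in> carrier G\<close>]]) (use F in auto)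
    ultimately show ?thesis by (simp add: card_image)
  qed
  finally have "\<bar>real (card {f\<in>F. h f g = c}) - real (card {f\<in>F. Q f})\<bar> \<le> \<epsilon> * real (card F)"
    using card_filter_le_symmetric_difference[of "(\<lambda>f. inv g \<otimes> f) ` F" F Q] \<open>finite F\<close> foelner
    by simp
  moreover have "balance_defect G T g c (empirical_weight F h) =
      (real (card {f\<in>F. h f g = c}) - real (card {f\<in>F. Q f})) / real (card F)"
    using sum_empirical_weight[OF \<open>finite F\<close> \<open>finite T\<close> \<open>h ` F \<subseteq> T\<close>]
    by (simp add: balance_defect_def Q_def diff_divide_distrib)
  moreover have "0 < real (card F)" using \<open>finite F\<close> \<open>F \<noteq> {}\<close> by (simp add: card_gt_0_iff)
  ultimately have "\<bar>balance_defect G T g c (empirical_weight F h)\<bar> \<le> \<epsilon>"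
    by (simp add: abs_divide pos_divide_le_eq mult.commute)
  then show ?thesis by (simp add: h_def[abs_def])
qed

lemma amenable_group_foelner_set:
  assumes "amenable_group G" and "finite K" and "K \<subseteq> carrier G" and "0 < \<epsilon>"
  obtains F where "finite F" and "F \<noteq> {}" and "F \<subseteq> carrier G"
    and "\<And>k. k \<in> K \<Longrightarrow> real (card (((\<lambda>f. k \<otimes>\<^bsub>G\<^esub> f) ` F - F) \<union> (F - (\<lambda>f. k \<otimes>\<^bsub>G\<^esub> f) ` F)))
      \<le> \<epsilon> * real (card F)"
  using assms(1)[unfolded amenable_group_def, THEN conjunct2, rule_format, of K \<epsilon>] assms(2-4) that
  by blast

lemma (in group) amenable_wang_subshift_almost_balanced:
  assumes "amenable_group G" and "set gs \<subseteq> carrier G" and "finite T"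
    and "x \<in> wang_subshift G gs T" and "0 < \<epsilon>"
  shows "\<exists>p\<in>weight_simplex T. \<forall>g\<in>set gs. \<forall>c. \<bar>balance_defect G T g c p\<bar> \<le> \<epsilon>"
proof -
  have inv_gens: "finite ((\<lambda>g. inv g) ` set gs)" "(\<lambda>g. inv g) ` set gs \<subseteq> carrier G"
    using assms(2) by auto
  obtain F where "finite F" "F \<noteq> {}" "F \<subseteq> carrier G" and foelner:
    "\<And>k. k \<in> (\<lambda>g. inv g) ` set gs \<Longrightarrow>
      real (card (((\<lambda>f. k \<otimes> f) ` F - F) \<union> (F - (\<lambda>f. k \<otimes> f) ` F))) \<le> \<epsilon> * real (card F)"
    using amenable_group_foelner_set[OF assms(1) inv_gens assms(5)] by metis
  have "(\<lambda>f. x (inv f)) ` F \<subseteq> T"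
    using assms(4) \<open>F \<subseteq> carrier G\<close> by (auto simp: wang_subshift_def)
  moreover have "\<forall>g\<in>set gs. \<forall>c.
      \<bar>balance_defect G T g c (empirical_weight F (\<lambda>f. x (inv f)))\<bar> \<le> \<epsilon>"
    by (intro ballI allI abs_balance_defect_empirical_weight_le[OF assms(4,2,3) \<open>finite F\<close> \<open>F \<noteq> {}\<close>
          \<open>F \<subseteq> carrier G\<close>] foelner) auto
  ultimately show ?thesis
    using empirical_weight_in_weight_simplex[OF \<open>finite F\<close> \<open>F \<noteq> {}\<close> assms(3)] by blast
qed

lemma cond_star_star'_if_amenable:
  assumes "amenable_group G" and "set gs \<subseteq> carrier G" and "finite T"
    and "wang_subshift G gs T \<noteq> {}"
  shows "cond_star_star' G gs T"
proof -
  interpret group G using assms(1) by (simp add: amenable_group_def)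
  obtain x where "x \<in> wang_subshift G gs T" using assms(4) by blast
  have "\<exists>p\<in>weight_simplex T. \<forall>i\<in>set gs \<times> UNIV. balance_defect G T (fst i) (snd i) p = 0"
  proof (rule compact_common_zero_if_approximate_zeros[OF compact_weight_simplex])
    show "continuous_on UNIV (balance_defect G T (fst i) (snd i))" for i
      unfolding balance_defect_def[abs_def]
      by (intro continuous_on_diff continuous_on_sum continuous_intros) simp_all
  next
    fix \<epsilon> :: real assume "0 < \<epsilon>"
    then show "\<exists>p\<in>weight_simplex T. \<forall>i\<in>set gs \<times> UNIV. \<bar>balance_defect G T (fst i) (snd i) p\<bar> \<le> \<epsilon>"
      using amenable_wang_subshift_almost_balanced[OF assms(1-3) \<open>x \<in> wang_subshift G gs T\<close>] by auto
  qed
  then obtain p where "p \<in> weight_simplex T"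
    and balanced: "\<forall>g\<in>set gs. \<forall>c. balance_defect G T g c p = 0"
    by auto
  then have p_range: "p \<tau> \<in> (if \<tau> \<in> T then {0..1} else {0})" for \<tau>
    unfolding weight_simplex_def by (blast intro: PiE_mem)
  have "\<forall>\<tau>\<in>T. 0 \<le> p \<tau>"
  proof
    fix \<tau> assume "\<tau> \<in> T"
    then show "0 \<le> p \<tau>" using p_range[of \<tau>] by simp
  qed
  moreover have "sum p T = 1" using \<open>p \<in> weight_simplex T\<close> by (simp add: weight_simplex_def)
  then have "\<exists>\<tau>\<in>T. p \<tau> \<noteq> 0" using sum.neutral by force
  ultimately show ?thesis
    using balanced unfolding cond_star_star'_def balance_defect_def by auto
qed

theorem mainTheorem3:
  fixes G :: "('g, 'b) monoid_scheme" and gs :: "'g list"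
    and C :: "'c set" and T :: "('g \<Rightarrow> 'c) set"
  assumes "amenable_group G"
    and "gs \<noteq> []" and "distinct gs" and "set gs \<subseteq> carrier G"
    and "generate G (set gs) = carrier G"
    and "finite C"
    and "finite T" and "T \<subseteq> sym_gens G gs \<rightarrow>\<^sub>E C"
    and "wang_subshift G gs T \<noteq> {}"
  shows "cond_star_star G gs T"
  using cond_star_star_if_cond_star_star'[OF assms(7,2)]
    cond_star_star'_if_amenable[OF assms(1,4,7,9)] .

end
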